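(* Let $B,C,D\in\mathbb{C}$. If all roots of the polynomial $x^3+Bx^2+Cx+D$ have the same absolute value, then $C|C|^2=\overline{B}|B|^2D$.
   Context: $\overline{z}$ denotes complex conjugation. *)

theory Defs
  imports "HOL-Analysis.Analysis" "HOL-Computational_Algebra.Polynomial"
begin

end

theory Submission
  imports Defs "HOL-Computational_Algebra.Fundamental_Theorem_Algebra"
begin

text \<open>Write \<open>z\<^sub>1, z\<^sub>2, z\<^sub>3\<close> for the roots, so that \<open>B = -e\<^sub>1\<close>, \<open>C = e\<^sub>2\<close>, \<open>D = -e\<^sub>3\<close>
  in terms of the elementary symmetric polynomials. If all roots lie on the circle \<open>|z| = r > 0\<close>,
  then \<open>cnj z\<^sub>i = r\<^sup>2 / z\<^sub>i\<close>, whence \<open>cnj e\<^sub>1 = r\<^sup>2 e\<^sub>2 / e\<^sub>3\<close> and \<open>cnj e\<^sub>2 = r\<^sup>4 e\<^sub>1 / e\<^sub>3\<close>;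
  both sides of the claimed identity then equal \<open>r\<^sup>4 e\<^sub>1 e\<^sub>2\<^sup>2 / e\<^sub>3\<close>.\<close>

lemma cnj_eq_divide_if_norm_eq:
  fixes z :: complex
  assumes "cmod z = r" "z \<noteq> 0"
  shows "cnj z = of_real (r\<^sup>2) / z"
  using assms by (simp add: field_simps complex_norm_square[symmetric])

lemma elementary_symmetric_identity_on_circle:
  fixes z1 z2 z3 :: complex
  assumes "cmod z1 = r" "cmod z2 = r" "cmod z3 = r"
  defines "e1 \<equiv> z1 + z2 + z3" and "e2 \<equiv> z1*z2 + z1*z3 + z2*z3" and "e3 \<equiv> z1*z2*z3"
  shows "e2 * (e2 * cnj e2) = cnj e1 * (e1 * cnj e1) * e3"
proof (cases "r = 0")
  case True
  then show ?thesis using assms by (simp add: e1_def e2_def e3_def)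
next
  case False
  then have nz: "z1 \<noteq> 0" "z2 \<noteq> 0" "z3 \<noteq> 0" using assms by auto
  define R :: complex where "R = of_real (r\<^sup>2)"
  have cnj_z: "cnj z1 = R / z1" "cnj z2 = R / z2" "cnj z3 = R / z3"
    using cnj_eq_divide_if_norm_eq assms nz unfolding R_def by auto
  have cnj_e: "cnj e1 = R * e2 / e3" "cnj e2 = R * R * e1 / e3"
    unfolding e1_def e2_def e3_def complex_cnj_add complex_cnj_mult cnj_z
    using nz by (simp_all add: field_simps)
  moreover have "e3 \<noteq> 0" using nz by (simp add: e3_def)
  ultimately show ?thesis unfolding cnj_e by (simp add: field_simps)
qed

lemma monic_cubic_splits:
  fixes B C D :: complex
  obtains z1 z2 z3 where "[:D, C, B, 1:] = [:-z1, 1:] * [:-z2, 1:] * [:-z3, 1:]"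
proof -
  obtain root where decomp:
    "smult (lead_coeff [:D, C, B, 1:]) (\<Prod>i<degree [:D, C, B, 1:]. [:-root i, 1:]) = [:D, C, B, 1:]"
    by (rule complex_poly_decompose')
  have deg: "degree [:D, C, B, 1:] = 3" and lead: "coeff [:D, C, B, 1:] 3 = 1"
    by (simp_all add: numeral_3_eq_3)
  have "[:D, C, B, 1:] = (\<Prod>i<3. [:-root i, 1:])"
    using decomp unfolding deg lead smult_1_left by (rule sym)
  also have "\<dots> = [:-root 0, 1:] * [:-root 1, 1:] * [:-root 2, 1:]"
    by (simp add: eval_nat_numeral lessThan_Suc mult_ac)
  finally show ?thesis by (rule that)
qed

lemma cubic_vieta:
  fixes B C D z1 z2 z3 :: "'a :: comm_ring_1"
  assumes "[:D, C, B, 1:] = [:-z1, 1:] * [:-z2, 1:] * [:-z3, 1:]"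
  shows "B = -(z1 + z2 + z3)" "C = z1*z2 + z1*z3 + z2*z3" "D = -(z1*z2*z3)"
  using assms by (simp_all add: algebra_simps)

theorem lemma4p5:
  fixes B C D :: complex
  assumes "\<forall>z w. poly [:D, C, B, 1:] z = 0 \<and> poly [:D, C, B, 1:] w = 0 \<longrightarrow> cmod z = cmod w"
  shows "C * of_real ((cmod C)^2) = cnj B * of_real ((cmod B)^2) * D"
proof -
  obtain z1 z2 z3 where split: "[:D, C, B, 1:] = [:-z1, 1:] * [:-z2, 1:] * [:-z3, 1:]"
    by (rule monic_cubic_splits)
  have roots: "poly [:D, C, B, 1:] z = 0" if "z \<in> {z1, z2, z3}" for z
    using that unfolding split poly_mult by auto
  have "cmod z1 = cmod z1" "cmod z2 = cmod z1" "cmod z3 = cmod z1"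
    using assms roots by blast+
  from elementary_symmetric_identity_on_circle[OF this]
  have "C * (C * cnj C) = cnj B * (B * cnj B) * D"
    unfolding cubic_vieta[OF split]
    by (simp only: complex_cnj_minus mult_minus_left mult_minus_right minus_minus)
  then show ?thesis by (simp only: complex_norm_square)
qed

end
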